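(* Let $G=(V,E)$ be a simple undirected graph with all degrees $d_i>0$, degree matrix $\mathbf{D}$, adjacency matrix $\mathbf{A}$, and $\mathbf{P}=\mathbf{A}\mathbf{D}^{-1}$. Let $t>0$, $N\ge 1$ an integer, $\mathbf{s}$ a stochastic vector, and $T_N(t\mathbf{P})=\sum_{k=0}^N\tfrac{t^k}{k!}\mathbf{P}^k$. For $k=0,\dots,N$ define the polynomial $\psi_k(x)=\sum_{m=0}^{N-k}\frac{k!}{(m+k)!}x^m$, evaluated at a matrix in the usual way. Then at any step of hk-relax, the solution vector $\mathbf{y}$ and the residual blocks $\mathbf{r}_0,\dots,\mathbf{r}_N$ satisfy $$T_N(t\mathbf{P})\mathbf{s}-\mathbf{y}=\sum_{k=0}^N\psi_k(t\mathbf{P})\mathbf{r}_k.$$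
   Context: Let $\mathbf{S}$ be the $(N+1)\times(N+1)$ matrix of zeros with first subdiagonal $[\tfrac11,\tfrac12,\dots,\tfrac1N]$, and consider the linear system $(\mathbf{I}-\mathbf{S}\otimes(t\mathbf{P}))\mathbf{v}=\mathbf{e}_1\otimes\mathbf{s}$, whose exact solution has blocks $\mathbf{v}_k=\tfrac{t^k}{k!}\mathbf{P}^k\mathbf{s}$, $k=0,\dots,N$. hk-relax maintains an approximate solution $\hat{\mathbf{v}}=[\hat{\mathbf{v}}_0;\dots;\hat{\mathbf{v}}_N]$ (initially zero) with $\mathbf{y}=\sum_{k=0}^N\hat{\mathbf{v}}_k$, and residual $\mathbf{r}=[\mathbf{r}_0;\dots;\mathbf{r}_N]=\mathbf{e}_1\otimes\mathbf{s}-(\mathbf{I}-\mathbf{S}\otimes(t\mathbf{P}))\hat{\mathbf{v}}$ (initially $\mathbf{e}_1\otimes\mathbf{s}$). Writing $r(i,j)$ for the entry of node $i$ in block $j$, a step chooses an entry $r(i,j)$, adds it to entry $i$ of $\hat{\mathbf{v}}_j$ (hence to $y_i$), sets $r(i,j)=0$, and, if $j<N$, adds $r(i,j)\tfrac{t}{j+1}\mathbf{P}\mathbf{e}_i$ to block $\mathbf{r}_{j+1}$. *)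

theory Defs
  imports Complex_Main
begin

text \<open>Graphs on the vertex set {0..<n}; vectors are functions nat => real (entries i < n
  are meaningful), matrices are functions nat => nat => real (entries i,j < n).\<close>

definition simple_graph :: "nat \<Rightarrow> (nat \<Rightarrow> nat \<Rightarrow> bool) \<Rightarrow> bool" where
  "simple_graph n E \<longleftrightarrow> (\<forall>i<n. \<forall>j<n. E i j \<longleftrightarrow> E j i) \<and> (\<forall>i<n. \<not> E i i)"

definition degree :: "nat \<Rightarrow> (nat \<Rightarrow> nat \<Rightarrow> bool) \<Rightarrow> nat \<Rightarrow> nat" where
  "degree n E i = card {j. j < n \<and> E i j}"

definition adj_mat :: "(nat \<Rightarrow> nat \<Rightarrow> bool) \<Rightarrow> nat \<Rightarrow> nat \<Rightarrow> real" where
  "adj_mat E i j = (if E i j then 1 else 0)"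

definition walk_mat :: "nat \<Rightarrow> (nat \<Rightarrow> nat \<Rightarrow> bool) \<Rightarrow> nat \<Rightarrow> nat \<Rightarrow> real" where
  "walk_mat n E i j = adj_mat E i j / real (degree n E j)"

definition mat_mult :: "nat \<Rightarrow> (nat \<Rightarrow> nat \<Rightarrow> real) \<Rightarrow> (nat \<Rightarrow> nat \<Rightarrow> real) \<Rightarrow> nat \<Rightarrow> nat \<Rightarrow> real" where
  "mat_mult n M M' i j = (\<Sum>k<n. M i k * M' k j)"

definition mat_id :: "nat \<Rightarrow> nat \<Rightarrow> real" where
  "mat_id i j = (if i = j then 1 else 0)"

fun mat_pow :: "nat \<Rightarrow> (nat \<Rightarrow> nat \<Rightarrow> real) \<Rightarrow> nat \<Rightarrow> nat \<Rightarrow> nat \<Rightarrow> real" where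
  "mat_pow n M 0 = mat_id"
| "mat_pow n M (Suc m) = mat_mult n (mat_pow n M m) M"

definition mat_vec :: "nat \<Rightarrow> (nat \<Rightarrow> nat \<Rightarrow> real) \<Rightarrow> (nat \<Rightarrow> real) \<Rightarrow> nat \<Rightarrow> real" where
  "mat_vec n M x i = (\<Sum>j<n. M i j * x j)"

definition taylor_mat :: "nat \<Rightarrow> nat \<Rightarrow> real \<Rightarrow> (nat \<Rightarrow> nat \<Rightarrow> real) \<Rightarrow> nat \<Rightarrow> nat \<Rightarrow> real" where
  "taylor_mat n N t P i j = (\<Sum>k=0..N. t ^ k / fact k * mat_pow n P k i j)"

definition psi_mat :: "nat \<Rightarrow> nat \<Rightarrow> nat \<Rightarrow> (nat \<Rightarrow> nat \<Rightarrow> real) \<Rightarrow> nat \<Rightarrow> nat \<Rightarrow> real" where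
  "psi_mat n N k X i j = (\<Sum>m=0..N-k. fact k / fact (m + k) * mat_pow n X m i j)"

text \<open>States of hk-relax: (y, vhat, r) with vhat j i = entry i of block j, r j i = r(i,j).\<close>
type_synonym hk_state = "(nat \<Rightarrow> real) \<times> (nat \<Rightarrow> nat \<Rightarrow> real) \<times> (nat \<Rightarrow> nat \<Rightarrow> real)"

definition hk_init :: "(nat \<Rightarrow> real) \<Rightarrow> hk_state" where
  "hk_init s = ((\<lambda>_. 0), (\<lambda>_ _. 0), (\<lambda>j. if j = 0 then s else (\<lambda>_. 0)))"

definition hk_step :: "nat \<Rightarrow> (nat \<Rightarrow> nat \<Rightarrow> real) \<Rightarrow> real \<Rightarrow> nat \<Rightarrow> nat \<Rightarrow> nat \<Rightarrow> hk_state \<Rightarrow> hk_state" where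
  "hk_step n P t N i j st = (case st of (y, v, r) \<Rightarrow>
     (let \<rho> = r j i;
          y' = y(i := y i + \<rho>);
          v' = v(j := (v j)(i := v j i + \<rho>));
          r1 = r(j := (r j)(i := 0));
          r' = (if j < N then r1(j + 1 := (\<lambda>k. r1 (j + 1) k + \<rho> * (t / real (j + 1)) * P k i))
                else r1)
      in (y', v', r')))"

inductive hk_reach :: "nat \<Rightarrow> (nat \<Rightarrow> nat \<Rightarrow> real) \<Rightarrow> real \<Rightarrow> nat \<Rightarrow> (nat \<Rightarrow> real) \<Rightarrow> hk_state \<Rightarrow> bool"
  for n P t N s where
  init: "hk_reach n P t N s (hk_init s)"
| step: "hk_reach n P t N s st \<Longrightarrow> i < n \<Longrightarrow> j \<le> N \<Longrightarrow> hk_reach n P t N s (hk_step n P t N i j st)"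

end

theory Submission
  imports Defs
begin

text \<open>Initially the
  only residual is r_0 = s and \<psi>_0(tP) = T_N(tP). A step moving \<rho> = r(i,j) into y_i
  removes \<rho> e_i from block j and adds \<rho> t/(j+1) P e_i to block j+1; by the recursion
  \<psi>_j(X) = I + \<psi>_{j+1}(X) X / (j+1) (and \<psi>_N = I) the weighted sum drops by exactly
  \<rho> e_i, matching the increase of y.\<close>

lemma mat_pow_scale: "mat_pow n (\<lambda>a b. t * P a b) m a b = t ^ m * mat_pow n P m a b"
  by (induction m arbitrary: b) (simp_all add: mat_mult_def sum_distrib_left algebra_simps)

lemma psi_mat_0_scale_eq_taylor_mat:
  "psi_mat n N 0 (\<lambda>a b. t * P a b) a b = taylor_mat n N t P a b"
  unfolding psi_mat_def taylor_mat_def by (simp add: mat_pow_scale)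

lemma psi_mat_last: "psi_mat n N N X a b = mat_id a b"
  unfolding psi_mat_def by simp

lemma psi_mat_Suc_mat_mult:
  "mat_mult n (psi_mat n N (Suc j) X) X a b
     = (\<Sum>m\<le>N - Suc j. fact (Suc j) / fact (Suc m + j) * mat_pow n X (Suc m) a b)"
proof -
  have "mat_mult n (psi_mat n N (Suc j) X) X a b
      = (\<Sum>m\<le>N - Suc j. \<Sum>k<n. fact (Suc j) / fact (m + Suc j) * mat_pow n X m a k * X k b)"
    unfolding mat_mult_def psi_mat_def
    by (simp add: atLeast0AtMost sum_distrib_right sum.swap[of _ "{..<n}"])
  then show ?thesis
    by (simp add: mat_mult_def sum_distrib_left mult.assoc del: fact_Suc)
qed

lemma psi_mat_recursion:
  assumes "j < N"
  shows "psi_mat n N j X a b = mat_id a b + mat_mult n (psi_mat n N (Suc j) X) X a b / real (Suc j)"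
proof -
  define f where "f m = fact j / fact (m + j) * mat_pow n X m a b" for m
  have "N - j = Suc (N - Suc j)" using assms by simp
  then have "psi_mat n N j X a b = f 0 + (\<Sum>m\<le>N - Suc j. f (Suc m))"
    unfolding psi_mat_def f_def atLeast0AtMost by (simp only: sum.atMost_Suc_shift)
  moreover have "f 0 = mat_id a b" unfolding f_def by simp
  moreover have "f (Suc m) = fact (Suc j) / fact (Suc m + j) * mat_pow n X (Suc m) a b / real (Suc j)"
    for m
    unfolding f_def by (simp add: fact_Suc[of j] del: fact_Suc)
  ultimately show ?thesis
    by (simp add: psi_mat_Suc_mat_mult sum_divide_distrib del: fact_Suc)
qed

lemma psi_sum_update_block:
  assumes "k0 \<le> N"
  shows "(\<Sum>k=0..N. mat_vec n (psi_mat n N k X) ((r(k0 := (\<lambda>b. r k0 b + c b))) k) a)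
       = (\<Sum>k=0..N. mat_vec n (psi_mat n N k X) (r k) a) + mat_vec n (psi_mat n N k0 X) c a"
proof -
  have "(\<Sum>k=0..N. mat_vec n (psi_mat n N k X) ((r(k0 := (\<lambda>b. r k0 b + c b))) k) a)
      = (\<Sum>k=0..N. mat_vec n (psi_mat n N k X) (r k) a
          + (if k = k0 then mat_vec n (psi_mat n N k0 X) c a else 0))"
    by (rule sum.cong) (auto simp: mat_vec_def algebra_simps sum.distrib)
  then show ?thesis using assms by (simp add: sum.distrib)
qed

lemma hk_step_psi_sum:
  fixes P :: "nat \<Rightarrow> nat \<Rightarrow> real" and t :: real
  assumes "i < n" "j \<le> N"
  defines "X \<equiv> \<lambda>a b. t * P a b"
  shows "(\<Sum>k=0..N. mat_vec n (psi_mat n N k X) (snd (snd (hk_step n P t N i j (y, v, r))) k) a)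
       = (\<Sum>k=0..N. mat_vec n (psi_mat n N k X) (r k) a) - r j i * mat_id a i"
proof -
  define \<rho> where "\<rho> = r j i"
  define e where "e = (\<lambda>b. if b = i then 1 else 0 :: real)"
  define r1 where "r1 = r(j := (\<lambda>b. r j b + (- \<rho>) * e b))"
  define W where "W r' = (\<Sum>k=0..N. mat_vec n (psi_mat n N k X) (r' k) a)" for r'
  have "mat_vec n (psi_mat n N j X) (\<lambda>b. - \<rho> * e b) a = - \<rho> * psi_mat n N j X a i"
    unfolding mat_vec_def e_def using \<open>i < n\<close> by (simp add: if_distrib cong: if_cong)
  then have removed: "W r1 = W r - \<rho> * psi_mat n N j X a i"
    unfolding W_def r1_def
    using psi_sum_update_block[OF \<open>j \<le> N\<close>, of n X r "\<lambda>b. - \<rho> * e b" a] by simp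
  have r1_upd: "r1 = r(j := (r j)(i := 0))"
    unfolding r1_def e_def \<rho>_def by (auto simp: fun_eq_iff)
  show ?thesis
  proof (cases "j < N")
    case True
    have pushed: "mat_vec n (psi_mat n N (Suc j) X) (\<lambda>b. \<rho> * (t / real (Suc j)) * P b i) a
        = \<rho> * mat_mult n (psi_mat n N (Suc j) X) X a i / real (Suc j)"
      unfolding mat_vec_def mat_mult_def X_def
      by (simp add: sum_distrib_left sum_divide_distrib algebra_simps)
    have "snd (snd (hk_step n P t N i j (y, v, r)))
        = r1(Suc j := (\<lambda>b. r1 (Suc j) b + \<rho> * (t / real (Suc j)) * P b i))"
      using True by (simp add: hk_step_def Let_def r1_upd \<rho>_def)
    then have "W (snd (snd (hk_step n P t N i j (y, v, r))))
        = W r1 + \<rho> * mat_mult n (psi_mat n N (Suc j) X) X a i / real (Suc j)"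
      unfolding W_def using psi_sum_update_block[of "Suc j" N n X r1] True pushed by simp
    then show ?thesis
      using removed psi_mat_recursion[OF True, of n X a i]
      by (simp add: W_def \<rho>_def algebra_simps)
  next
    case False
    then have "j = N" using \<open>j \<le> N\<close> by simp
    have "snd (snd (hk_step n P t N i j (y, v, r))) = r1"
      using False by (simp add: hk_step_def Let_def r1_upd \<rho>_def)
    then show ?thesis
      using removed by (simp add: W_def \<rho>_def \<open>j = N\<close> psi_mat_last)
  qed
qed

lemma hk_reach_error_eq_psi_sum:
  assumes "hk_reach n P t N s (y, v, r)" "a < n"
  shows "mat_vec n (taylor_mat n N t P) s a - y a
           = (\<Sum>k=0..N. mat_vec n (psi_mat n N k (\<lambda>a b. t * P a b)) (r k) a)"
  using assms
proof (induction "(y, v, r)" arbitrary: y v r rule: hk_reach.induct)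
  case init
  then have "r = (\<lambda>j. if j = 0 then s else (\<lambda>_. 0))" "y = (\<lambda>_. 0)"
    by (simp_all add: hk_init_def)
  then show ?case
    by (simp add: sum.atLeast_Suc_atMost mat_vec_def psi_mat_0_scale_eq_taylor_mat)
next
  case (step st i j)
  obtain y0 v0 r0 where st: "st = (y0, v0, r0)" by (cases st)
  have y: "y = y0(i := y0 i + r0 j i)" and r: "r = snd (snd (hk_step n P t N i j (y0, v0, r0)))"
    using step.hyps(5) by (simp_all add: st hk_step_def Let_def)
  have "mat_vec n (taylor_mat n N t P) s a - y a
      = mat_vec n (taylor_mat n N t P) s a - y0 a - r0 j i * mat_id a i"
    by (simp add: y mat_id_def)
  also have "\<dots> = (\<Sum>k=0..N. mat_vec n (psi_mat n N k (\<lambda>a b. t * P a b)) (r k) a)"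
    using step.hyps(2)[OF st step.prems] hk_step_psi_sum[OF step.hyps(3,4)] by (simp add: r)
  finally show ?case .
qed

theorem lemma1:
  fixes n N :: nat and E :: "nat \<Rightarrow> nat \<Rightarrow> bool" and t :: real and s :: "nat \<Rightarrow> real"
    and y :: "nat \<Rightarrow> real" and v r :: "nat \<Rightarrow> nat \<Rightarrow> real"
  assumes "simple_graph n E"
    and "\<forall>i<n. degree n E i > 0"
    and "t > 0" and "N \<ge> 1"
    and "\<forall>i<n. s i \<ge> 0" and "(\<Sum>i<n. s i) = 1"
    and "hk_reach n (walk_mat n E) t N s (y, v, r)"
  shows "\<forall>i<n. mat_vec n (taylor_mat n N t (walk_mat n E)) s i - y i
           = (\<Sum>k=0..N. mat_vec n (psi_mat n N k (\<lambda>a b. t * walk_mat n E a b)) (r k) i)"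
  using hk_reach_error_eq_psi_sum[OF assms(7)] by blast

end
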